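(* Let $\mathcal{H}=(V,H,\bm{w})$ be a finite, connected, weighted undirected hypergraph in which every hyperedge has at least two vertices, and let $C\in\mathbb{R}$. Suppose $\kappa(u,v)\ge C$ for every well-transported pair $\{u,v\}$. Then $\kappa(x,y)\ge C$ for all distinct $x,y\in V$.
   Context: A weighted undirected hypergraph $\mathcal{H}=(V,H,\bm{w})$ has a finite vertex set $V$, a finite set $H$ of hyperedges (subsets of $V$), and positive weights $w_h>0$. Distinct vertices $u,v$ are adjacent ($u\sim v$) if some hyperedge contains both; $\Gamma(x)=\{z: z\sim x\}$; $\mathrm{Deg}(x)=\sum_{h\ni x}w_h$. A hyperpath connecting $u$ and $v$ is a sequence of hyperedges $h_1,\dots,h_l$ with $u\in h_1$, $v\in h_l$, $h_j\cap h_{j+1}\neq\emptyset$; $\mathcal{H}$ is connected if all pairs of distinct vertices are connected by hyperpaths. For $u\ne v$, $d(u,v)=\inf_\gamma\sum_{h\in\gamma}w_h$ over hyperpaths connecting $u,v$; $d(u,u)=0$. $W(\mu,\nu)=\inf_\pi\sum_{x,y}\pi(x,y)d(x,y)$ over couplings $\pi$ of probability measures $\mu,\nu$ on $V$. For $\alpha\in[0,1]$: $\mu_x^\alpha(x)=\alpha$, $\mu_x^\alpha(z)=(1-\alpha)\sum_{h'\ni x,z}\frac{1}{|h'|-1}\frac{w_{h'}}{\mathrm{Deg}(x)}$ for $z\in\Gamma(x)$, $0$ otherwise. For distinct $u,v$: $\kappa_\alpha(u,v)=1-W(\mu_u^\alpha,\mu_v^\alpha)/d(u,v)$, and the Lin–Lu–Yau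 curvature is $\kappa(u,v)=\lim_{\alpha\to1^-}\kappa_\alpha(u,v)/(1-\alpha)$ (this limit exists in $\mathbb{R}$). A pair $\{u,v\}$ of distinct vertices is well-transported if there is a hyperedge $h$ containing both $u$ and $v$ with $d(u,v)=w_h$. *)

theory Defs
  imports "HOL-Analysis.Analysis"
begin

definition hypergraph :: "'a set \<Rightarrow> 'a set set \<Rightarrow> ('a set \<Rightarrow> real) \<Rightarrow> bool" where
  "hypergraph V H w \<longleftrightarrow> finite V \<and> finite H \<and> (\<forall>h\<in>H. h \<subseteq> V \<and> w h > 0)"

definition adj :: "'a set set \<Rightarrow> 'a \<Rightarrow> 'a \<Rightarrow> bool" where
  "adj H u v \<longleftrightarrow> u \<noteq> v \<and> (\<exists>h\<in>H. u \<in> h \<and> v \<in> h)"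

definition Deg :: "'a set set \<Rightarrow> ('a set \<Rightarrow> real) \<Rightarrow> 'a \<Rightarrow> real" where
  "Deg H w x = (\<Sum>h\<in>{h\<in>H. x \<in> h}. w h)"

definition hyperpath :: "'a set set \<Rightarrow> 'a set list \<Rightarrow> 'a \<Rightarrow> 'a \<Rightarrow> bool" where
  "hyperpath H hs u v \<longleftrightarrow> hs \<noteq> [] \<and> set hs \<subseteq> H \<and> u \<in> hd hs \<and> v \<in> last hs \<and>
     (\<forall>j. Suc j < length hs \<longrightarrow> hs ! j \<inter> hs ! Suc j \<noteq> {})"

definition hconnected :: "'a set \<Rightarrow> 'a set set \<Rightarrow> bool" where
  "hconnected V H \<longleftrightarrow> (\<forall>u\<in>V. \<forall>v\<in>V. u \<noteq> v \<longrightarrow> (\<exists>hs. hyperpath H hs u v))"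

definition hdist :: "'a set set \<Rightarrow> ('a set \<Rightarrow> real) \<Rightarrow> 'a \<Rightarrow> 'a \<Rightarrow> real" where
  "hdist H w u v = (if u = v then 0
     else Inf {sum_list (map w hs) | hs. hyperpath H hs u v})"

definition coupling :: "'a set \<Rightarrow> ('a \<Rightarrow> real) \<Rightarrow> ('a \<Rightarrow> real) \<Rightarrow> ('a \<Rightarrow> 'a \<Rightarrow> real) \<Rightarrow> bool" where
  "coupling V \<mu> \<nu> \<pi> \<longleftrightarrow> (\<forall>x y. \<pi> x y \<ge> 0) \<and> (\<forall>x y. (x \<notin> V \<or> y \<notin> V) \<longrightarrow> \<pi> x y = 0) \<and>
     (\<forall>x\<in>V. (\<Sum>y\<in>V. \<pi> x y) = \<mu> x) \<and> (\<forall>y\<in>V. (\<Sum>x\<in>V. \<pi> x y) = \<nu> y)"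

definition wasserstein :: "'a set \<Rightarrow> 'a set set \<Rightarrow> ('a set \<Rightarrow> real) \<Rightarrow> ('a \<Rightarrow> real) \<Rightarrow> ('a \<Rightarrow> real) \<Rightarrow> real" where
  "wasserstein V H w \<mu> \<nu> = Inf {(\<Sum>x\<in>V. \<Sum>y\<in>V. \<pi> x y * hdist H w x y) | \<pi>. coupling V \<mu> \<nu> \<pi>}"

definition rw_measure :: "'a set set \<Rightarrow> ('a set \<Rightarrow> real) \<Rightarrow> real \<Rightarrow> 'a \<Rightarrow> 'a \<Rightarrow> real" where
  "rw_measure H w \<alpha> x z = (if z = x then \<alpha>
     else if adj H x z then (1 - \<alpha>) * (\<Sum>h\<in>{h\<in>H. x \<in> h \<and> z \<in> h}. (1 / (real (card h) - 1)) * (w h / Deg H w x))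
     else 0)"

definition kappa_alpha :: "'a set \<Rightarrow> 'a set set \<Rightarrow> ('a set \<Rightarrow> real) \<Rightarrow> real \<Rightarrow> 'a \<Rightarrow> 'a \<Rightarrow> real" where
  "kappa_alpha V H w \<alpha> u v =
     1 - wasserstein V H w (rw_measure H w \<alpha> u) (rw_measure H w \<alpha> v) / hdist H w u v"

definition LLY_curvature :: "'a set \<Rightarrow> 'a set set \<Rightarrow> ('a set \<Rightarrow> real) \<Rightarrow> 'a \<Rightarrow> 'a \<Rightarrow> real" where
  "LLY_curvature V H w u v = Lim (at_left 1) (\<lambda>\<alpha>. kappa_alpha V H w \<alpha> u v / (1 - \<alpha>))"

definition well_transported :: "'a set set \<Rightarrow> ('a set \<Rightarrow> real) \<Rightarrow> 'a \<Rightarrow> 'a \<Rightarrow> bool" where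
  "well_transported H w u v \<longleftrightarrow> u \<noteq> v \<and> (\<exists>h\<in>H. u \<in> h \<and> v \<in> h \<and> hdist H w u v = w h)"

end

theory Submission
  imports Defs
begin

text \<open>Write \<open>D\<^sub>\<alpha>(x,y) = (d(x,y) - W(\<mu>\<^sub>x\<^sup>\<alpha>, \<mu>\<^sub>y\<^sup>\<alpha>)) / (1 - \<alpha>)\<close>, so that \<open>d(x,y) \<kappa>(x,y)\<close> is the
  limit of \<open>D\<^sub>\<alpha>(x,y)\<close> as \<open>\<alpha> \<rightarrow> 1\<close>. For \<open>\<alpha> < \<beta>\<close> the measure \<open>\<mu>\<^sub>x\<^sup>\<beta>\<close> is a mixture of
  \<open>\<mu>\<^sub>x\<^sup>\<alpha>\<close> and the point mass at \<open>x\<close>, so joint convexity of \<open>W\<close> makes \<open>D\<^sub>\<alpha>\<close> nondecreasing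
  in \<open>\<alpha>\<close>; being bounded, it converges. The triangle inequality for \<open>W\<close> then makes \<open>d \<kappa>\<close>
  superadditive along geodesics: \<open>d(x,z) \<kappa>(x,z) + d(z,y) \<kappa>(z,y) \<le> d(x,y) \<kappa>(x,y)\<close> whenever
  \<open>d(x,y) = d(x,z) + d(z,y)\<close>. Cutting a shortest hyperpath from \<open>x\<close> to \<open>y\<close> after its first
  hyperedge splits off a well-transported pair, and induction along the path gives \<open>\<kappa>(x,y) \<ge> C\<close>.\<close>

section \<open>Hyperpaths and the hyperpath distance\<close>

abbreviation hyperpath_weight :: "('a set \<Rightarrow> real) \<Rightarrow> 'a set list \<Rightarrow> real" where
  "hyperpath_weight w hs \<equiv> sum_list (map w hs)"

lemma hyperpath_singleton [simp]: "hyperpath H [h] x y \<longleftrightarrow> h \<in> H \<and> x \<in> h \<and> y \<in> h"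
  by (simp add: hyperpath_def)

lemma hyperpath_append:
  assumes p: "hyperpath H p x y" and q: "hyperpath H q y z"
  shows "hyperpath H (p @ q) x z"
proof -
  have "p \<noteq> []" "q \<noteq> []" using p q by (simp_all add: hyperpath_def)
  have "(p @ q) ! j \<inter> (p @ q) ! Suc j \<noteq> {}" if j: "Suc j < length (p @ q)" for j
  proof (cases "Suc j < length p")
    case True
    then show ?thesis using p by (simp add: hyperpath_def nth_append)
  next
    case False
    consider "Suc j = length p" | "length p \<le> j" using False by linarith
    then show ?thesis
    proof cases
      case 1
      then have "(p @ q) ! j = last p" "(p @ q) ! Suc j = hd q"
        using \<open>p \<noteq> []\<close> \<open>q \<noteq> []\<close> by (simp_all add: nth_append last_conv_nth hd_conv_nth flip: 1)
      then show ?thesis using p q by (auto simp: hyperpath_def)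
    next
      case 2
      then show ?thesis using q j by (auto simp: hyperpath_def nth_append Suc_diff_le)
    qed
  qed
  then show ?thesis using p q \<open>p \<noteq> []\<close> \<open>q \<noteq> []\<close> by (auto simp: hyperpath_def)
qed

lemma hyperpath_ConsE:
  assumes "hyperpath H (h # t) x y" and "t \<noteq> []"
  obtains z where "h \<in> H" "x \<in> h" "z \<in> h" "hyperpath H t z y"
proof -
  have links: "(h # t) ! j \<inter> (h # t) ! Suc j \<noteq> {}" if "Suc j < length (h # t)" for j
    using assms(1) that by (simp add: hyperpath_def)
  obtain z where z: "z \<in> h" "z \<in> hd t"
    using links[of 0] \<open>t \<noteq> []\<close> by (cases t) auto
  have "hyperpath H t z y"
    unfolding hyperpath_def
  proof (intro conjI allI impI)
    fix j assume "Suc j < length t"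
    then show "t ! j \<inter> t ! Suc j \<noteq> {}" using links[of "Suc j"] by simp
  qed (use assms z in \<open>auto simp: hyperpath_def\<close>)
  then show thesis using that assms(1) z by (simp add: hyperpath_def)
qed

lemma hyperpath_weight_ge_length:
  "(\<And>h. h \<in> set hs \<Longrightarrow> m \<le> w h) \<Longrightarrow> real (length hs) * m \<le> hyperpath_weight w hs"
  by (induction hs) (auto simp: algebra_simps intro!: add_mono)

lemma hyperpath_weight_nonneg:
  "(\<And>h. h \<in> set hs \<Longrightarrow> 0 \<le> w h) \<Longrightarrow> 0 \<le> hyperpath_weight w hs"
  using hyperpath_weight_ge_length[of hs 0 w] by simp

lemma shortest_hyperpath_exists:
  assumes hg: "hypergraph V H w" and p: "hyperpath H p x y"
  obtains hs where "hyperpath H hs x y"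
    and "\<And>hs'. hyperpath H hs' x y \<Longrightarrow> hyperpath_weight w hs \<le> hyperpath_weight w hs'"
proof -
  have "finite H" and w_pos: "\<And>h. h \<in> H \<Longrightarrow> 0 < w h" using hg by (auto simp: hypergraph_def)
  have "H \<noteq> {}" using p by (cases p) (auto simp: hyperpath_def)
  define m where "m = Min (w ` H)"
  have "0 < m" and m_le: "\<And>h. h \<in> H \<Longrightarrow> m \<le> w h"
    using \<open>finite H\<close> \<open>H \<noteq> {}\<close> w_pos by (auto simp: m_def)
  define N where "N = nat \<lceil>hyperpath_weight w p / m\<rceil>"
  have length_le: "length hs \<le> N"
    if "hyperpath H hs x y" "hyperpath_weight w hs \<le> hyperpath_weight w p" for hs
  proof -
    have "real (length hs) * m \<le> hyperpath_weight w p"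
      using hyperpath_weight_ge_length[of hs m w] m_le that by (force simp: hyperpath_def)
    then have "real (length hs) \<le> hyperpath_weight w p / m" using \<open>0 < m\<close> by (simp add: field_simps)
    then show ?thesis unfolding N_def by linarith
  qed
  define F where "F = {hs. hyperpath H hs x y \<and> length hs \<le> N}"
  have "finite F"
    by (rule finite_subset[OF _ finite_lists_length_le[OF \<open>finite H\<close>, of N]])
      (auto simp: F_def hyperpath_def)
  moreover have "p \<in> F" using p length_le[OF p] by (simp add: F_def)
  ultimately obtain hs where hs: "hs \<in> F"
    and hs_min: "\<And>hs'. hs' \<in> F \<Longrightarrow> hyperpath_weight w hs \<le> hyperpath_weight w hs'"
    using arg_min_if_finite[of F "hyperpath_weight w"] by (metis empty_iff not_le)
  show thesis
  proof (rule that)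
    show "hyperpath H hs x y" using hs by (simp add: F_def)
    fix hs' assume hs': "hyperpath H hs' x y"
    show "hyperpath_weight w hs \<le> hyperpath_weight w hs'"
    proof (cases "hyperpath_weight w hs' \<le> hyperpath_weight w p")
      case True
      then show ?thesis using hs_min length_le[OF hs'] hs' by (simp add: F_def)
    next
      case False
      then show ?thesis using hs_min[OF \<open>p \<in> F\<close>] by linarith
    qed
  qed
qed

lemma hdist_self [simp]: "hdist H w x x = 0"
  by (simp add: hdist_def)

lemma hdist_le_hyperpath_weight:
  assumes "hypergraph V H w" and "hyperpath H hs x y"
  shows "hdist H w x y \<le> hyperpath_weight w hs"
proof -
  have "\<And>hs. hyperpath H hs x y \<Longrightarrow> 0 \<le> hyperpath_weight w hs"
    using assms(1) by (intro hyperpath_weight_nonneg) (force simp: hyperpath_def hypergraph_def)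
  then show ?thesis
    using assms(2) unfolding hdist_def by (auto intro!: cInf_lower bdd_belowI[of _ 0])
qed

locale connected_hypergraph =
  fixes V :: "'a set" and H :: "'a set set" and w :: "'a set \<Rightarrow> real"
  assumes hypergraph: "hypergraph V H w" and connected: "hconnected V H"
begin

lemma finite_V: "finite V"
  and edge_subset: "h \<in> H \<Longrightarrow> h \<subseteq> V" and weight_pos: "h \<in> H \<Longrightarrow> 0 < w h"
  using hypergraph by (auto simp: hypergraph_def)

lemma hyperpath_weight_pos: "hyperpath H hs x y \<Longrightarrow> 0 < hyperpath_weight w hs"
proof (cases hs)
  case (Cons h t)
  moreover assume "hyperpath H hs x y"
  ultimately have "h \<in> H" "set t \<subseteq> H" by (auto simp: hyperpath_def)
  then have "0 < w h" "0 \<le> hyperpath_weight w t"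
    using weight_pos hyperpath_weight_nonneg[of t w] by (auto intro: less_imp_le)
  then show ?thesis using Cons by simp
qed (simp add: hyperpath_def)

lemma vertex_in_edge: "x \<in> V \<Longrightarrow> y \<in> V \<Longrightarrow> x \<noteq> y \<Longrightarrow> \<exists>h\<in>H. x \<in> h"
  using connected unfolding hconnected_def hyperpath_def by (metis hd_in_set subsetD)

lemma shortest_hyperpath:
  assumes "x \<in> V" "y \<in> V" "x \<noteq> y"
  obtains hs where "hyperpath H hs x y" "hdist H w x y = hyperpath_weight w hs"
proof -
  obtain p where "hyperpath H p x y" using connected assms by (auto simp: hconnected_def)
  then obtain hs where hs: "hyperpath H hs x y"
    and min: "\<And>hs'. hyperpath H hs' x y \<Longrightarrow> hyperpath_weight w hs \<le> hyperpath_weight w hs'"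
    using shortest_hyperpath_exists[OF hypergraph] by blast
  have "hdist H w x y = hyperpath_weight w hs"
    unfolding hdist_def using assms(3) hs min by (auto intro!: cInf_eq_minimum)
  then show thesis using that hs by blast
qed

lemma hdist_nonneg: "x \<in> V \<Longrightarrow> y \<in> V \<Longrightarrow> 0 \<le> hdist H w x y"
  by (metis hdist_self hyperpath_weight_pos less_imp_le order.refl shortest_hyperpath)

lemma hdist_pos: "x \<in> V \<Longrightarrow> y \<in> V \<Longrightarrow> x \<noteq> y \<Longrightarrow> 0 < hdist H w x y"
  by (metis hyperpath_weight_pos shortest_hyperpath)

lemma hdist_triangle:
  assumes "x \<in> V" "y \<in> V" "z \<in> V"
  shows "hdist H w x z \<le> hdist H w x y + hdist H w y z"
proof (cases "x = y \<or> y = z")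
  case False
  obtain p where p: "hyperpath H p x y" "hdist H w x y = hyperpath_weight w p"
    using shortest_hyperpath assms False by metis
  obtain q where q: "hyperpath H q y z" "hdist H w y z = hyperpath_weight w q"
    using shortest_hyperpath assms False by metis
  show ?thesis
    using hdist_le_hyperpath_weight[OF hypergraph hyperpath_append[OF p(1) q(1)]] p(2) q(2) by simp
qed auto

end

section \<open>Optimal transport on a finite set\<close>

definition pmf_on :: "'a set \<Rightarrow> ('a \<Rightarrow> real) \<Rightarrow> bool" where
  "pmf_on V \<mu> \<longleftrightarrow> (\<forall>x\<in>V. 0 \<le> \<mu> x) \<and> sum \<mu> V = 1"

definition transport_cost :: "'a set \<Rightarrow> ('a \<Rightarrow> 'a \<Rightarrow> real) \<Rightarrow> ('a \<Rightarrow> 'a \<Rightarrow> real) \<Rightarrow> real" where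
  "transport_cost V d \<pi> = (\<Sum>x\<in>V. \<Sum>y\<in>V. \<pi> x y * d x y)"

definition transport_distance ::
    "'a set \<Rightarrow> ('a \<Rightarrow> 'a \<Rightarrow> real) \<Rightarrow> ('a \<Rightarrow> real) \<Rightarrow> ('a \<Rightarrow> real) \<Rightarrow> real" where
  "transport_distance V d \<mu> \<nu> = Inf (transport_cost V d ` {\<pi>. coupling V \<mu> \<nu> \<pi>})"

lemma wasserstein_eq_transport_distance: "wasserstein V H w = transport_distance V (hdist H w)"
  by (simp add: fun_eq_iff wasserstein_def transport_distance_def transport_cost_def image_Collect)

lemma coupling_product:
  assumes "pmf_on V \<mu>" "pmf_on V \<nu>"
  shows "coupling V \<mu> \<nu> (\<lambda>a b. if a \<in> V \<and> b \<in> V then \<mu> a * \<nu> b else 0)"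
  using assms unfolding coupling_def pmf_on_def
  by (auto simp: sum_distrib_left[symmetric] sum_distrib_right[symmetric])

lemma coupling_point_masses:
  assumes "finite V" "x \<in> V" "y \<in> V"
  shows "coupling V (\<lambda>a. if a = x then 1 else 0) (\<lambda>b. if b = y then 1 else 0)
           (\<lambda>a b. if a = x \<and> b = y then 1 else 0)"
  using assms by (auto simp: coupling_def if_distrib[of "\<lambda>t. t \<and> _"] sum.delta')

lemma coupling_mix:
  assumes "coupling V \<mu> \<nu> \<pi>" "coupling V \<mu>' \<nu>' \<pi>'" "0 \<le> l" "l \<le> 1"
  shows "coupling V (\<lambda>x. l * \<mu> x + (1 - l) * \<mu>' x) (\<lambda>y. l * \<nu> y + (1 - l) * \<nu>' y)
           (\<lambda>x y. l * \<pi> x y + (1 - l) * \<pi>' x y)"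
  using assms by (auto simp: coupling_def sum.distrib sum_distrib_left[symmetric])

text \<open>Where \<open>\<nu> b = 0\<close> the division gives \<open>0\<close>, which is harmless: the corresponding column
  of \<open>\<pi>\<^sub>1\<close> and row of \<open>\<pi>\<^sub>2\<close> vanish.\<close>
definition glue_couplings ::
    "'a set \<Rightarrow> ('a \<Rightarrow> real) \<Rightarrow> ('a \<Rightarrow> 'a \<Rightarrow> real) \<Rightarrow> ('a \<Rightarrow> 'a \<Rightarrow> real) \<Rightarrow> 'a \<Rightarrow> 'a \<Rightarrow> real" where
  "glue_couplings V \<nu> \<pi>\<^sub>1 \<pi>\<^sub>2 a c = (if a \<in> V \<and> c \<in> V then \<Sum>b\<in>V. \<pi>\<^sub>1 a b * \<pi>\<^sub>2 b c / \<nu> b else 0)"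

lemma glue_couplings_marginals:
  assumes "finite V" "coupling V \<mu> \<nu> \<pi>\<^sub>1" "coupling V \<nu> \<rho> \<pi>\<^sub>2" "b \<in> V"
  shows "a \<in> V \<Longrightarrow> (\<Sum>c\<in>V. \<pi>\<^sub>1 a b * \<pi>\<^sub>2 b c / \<nu> b) = \<pi>\<^sub>1 a b"
    and "c \<in> V \<Longrightarrow> (\<Sum>a\<in>V. \<pi>\<^sub>1 a b * \<pi>\<^sub>2 b c / \<nu> b) = \<pi>\<^sub>2 b c"
proof -
  have col: "(\<Sum>a\<in>V. \<pi>\<^sub>1 a b) = \<nu> b" and row: "(\<Sum>c\<in>V. \<pi>\<^sub>2 b c) = \<nu> b"
    using assms by (simp_all add: coupling_def)
  have vanish1: "\<pi>\<^sub>1 a b = 0" if "\<nu> b = 0" "a \<in> V" for a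
    using sum_nonneg_eq_0_iff[OF assms(1), of "\<lambda>a. \<pi>\<^sub>1 a b"] assms(2) that col
    by (auto simp: coupling_def)
  have vanish2: "\<pi>\<^sub>2 b c = 0" if "\<nu> b = 0" "c \<in> V" for c
    using sum_nonneg_eq_0_iff[OF assms(1), of "\<pi>\<^sub>2 b"] assms(3) that row
    by (auto simp: coupling_def)
  show "(\<Sum>c\<in>V. \<pi>\<^sub>1 a b * \<pi>\<^sub>2 b c / \<nu> b) = \<pi>\<^sub>1 a b" if "a \<in> V"
  proof -
    have "(\<Sum>c\<in>V. \<pi>\<^sub>1 a b * \<pi>\<^sub>2 b c / \<nu> b) = \<pi>\<^sub>1 a b / \<nu> b * (\<Sum>c\<in>V. \<pi>\<^sub>2 b c)"
      by (simp add: sum_distrib_left)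
    then show ?thesis using row vanish1[OF _ that] by (cases "\<nu> b = 0") auto
  qed
  show "(\<Sum>a\<in>V. \<pi>\<^sub>1 a b * \<pi>\<^sub>2 b c / \<nu> b) = \<pi>\<^sub>2 b c" if "c \<in> V"
  proof -
    have "(\<Sum>a\<in>V. \<pi>\<^sub>1 a b * \<pi>\<^sub>2 b c / \<nu> b) = \<pi>\<^sub>2 b c / \<nu> b * (\<Sum>a\<in>V. \<pi>\<^sub>1 a b)"
      by (subst sum_distrib_left) (rule sum.cong; simp)
    then show ?thesis using col vanish2[OF _ that] by (cases "\<nu> b = 0") auto
  qed
qed

lemma coupling_glue:
  assumes "finite V" "coupling V \<mu> \<nu> \<pi>\<^sub>1" "coupling V \<nu> \<rho> \<pi>\<^sub>2"
  shows "coupling V \<mu> \<rho> (glue_couplings V \<nu> \<pi>\<^sub>1 \<pi>\<^sub>2)"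
proof -
  note marginals = glue_couplings_marginals[OF assms]
  have "0 \<le> \<nu> b" if "b \<in> V" for b
    using assms(2) that unfolding coupling_def by (metis sum_nonneg)
  then have nonneg: "0 \<le> glue_couplings V \<nu> \<pi>\<^sub>1 \<pi>\<^sub>2 a c" for a c
    using assms(2,3) unfolding glue_couplings_def coupling_def by (auto intro!: sum_nonneg)
  have row: "(\<Sum>c\<in>V. glue_couplings V \<nu> \<pi>\<^sub>1 \<pi>\<^sub>2 a c) = \<mu> a" if "a \<in> V" for a
  proof -
    have "(\<Sum>c\<in>V. glue_couplings V \<nu> \<pi>\<^sub>1 \<pi>\<^sub>2 a c) = (\<Sum>b\<in>V. \<Sum>c\<in>V. \<pi>\<^sub>1 a b * \<pi>\<^sub>2 b c / \<nu> b)"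
      using that unfolding glue_couplings_def by (simp cong: sum.cong) (rule sum.swap)
    also have "\<dots> = \<mu> a"
      using that marginals(1) assms(2) by (simp add: coupling_def)
    finally show ?thesis .
  qed
  have col: "(\<Sum>a\<in>V. glue_couplings V \<nu> \<pi>\<^sub>1 \<pi>\<^sub>2 a c) = \<rho> c" if "c \<in> V" for c
  proof -
    have "(\<Sum>a\<in>V. glue_couplings V \<nu> \<pi>\<^sub>1 \<pi>\<^sub>2 a c) = (\<Sum>b\<in>V. \<Sum>a\<in>V. \<pi>\<^sub>1 a b * \<pi>\<^sub>2 b c / \<nu> b)"
      using that unfolding glue_couplings_def by (simp cong: sum.cong) (rule sum.swap)
    also have "\<dots> = \<rho> c"
      using that marginals(2) assms(3) by (simp add: coupling_def)
    finally show ?thesis .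
  qed
  have outside: "glue_couplings V \<nu> \<pi>\<^sub>1 \<pi>\<^sub>2 a c = 0" if "a \<notin> V \<or> c \<notin> V" for a c
    using that by (auto simp: glue_couplings_def)
  show ?thesis
    unfolding coupling_def using nonneg row col outside by (intro conjI allI impI ballI)
qed

locale finite_transport =
  fixes V :: "'a set" and d :: "'a \<Rightarrow> 'a \<Rightarrow> real"
  assumes finite_V: "finite V"
    and d_nonneg: "x \<in> V \<Longrightarrow> y \<in> V \<Longrightarrow> 0 \<le> d x y"
    and d_triangle: "x \<in> V \<Longrightarrow> y \<in> V \<Longrightarrow> z \<in> V \<Longrightarrow> d x z \<le> d x y + d y z"
begin

lemma transport_cost_nonneg: "coupling V \<mu> \<nu> \<pi> \<Longrightarrow> 0 \<le> transport_cost V d \<pi>"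
  unfolding transport_cost_def coupling_def by (auto intro!: sum_nonneg mult_nonneg_nonneg d_nonneg)

lemma transport_cost_mix:
  "transport_cost V d (\<lambda>x y. l * \<pi> x y + (1 - l) * \<pi>' x y)
     = l * transport_cost V d \<pi> + (1 - l) * transport_cost V d \<pi>'"
  unfolding transport_cost_def by (simp add: distrib_right mult.assoc sum.distrib sum_distrib_left)

lemma transport_distance_le_cost:
  "coupling V \<mu> \<nu> \<pi> \<Longrightarrow> transport_distance V d \<mu> \<nu> \<le> transport_cost V d \<pi>"
  unfolding transport_distance_def
  by (rule cInf_lower) (auto intro!: bdd_belowI[of _ 0] transport_cost_nonneg)

lemma transport_distance_ge:
  assumes "pmf_on V \<mu>" "pmf_on V \<nu>" "\<And>\<pi>. coupling V \<mu> \<nu> \<pi> \<Longrightarrow> c \<le> transport_cost V d \<pi>"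
  shows "c \<le> transport_distance V d \<mu> \<nu>"
  unfolding transport_distance_def using coupling_product[OF assms(1,2)] assms(3)
  by (intro cInf_greatest) auto

lemma transport_distance_approx:
  assumes "pmf_on V \<mu>" "pmf_on V \<nu>" "0 < \<epsilon>"
  obtains \<pi> where "coupling V \<mu> \<nu> \<pi>" "transport_cost V d \<pi> < transport_distance V d \<mu> \<nu> + \<epsilon>"
proof -
  have "transport_distance V d \<mu> \<nu> < transport_distance V d \<mu> \<nu> + \<epsilon>" using assms(3) by simp
  then show thesis
    using coupling_product[OF assms(1,2)] that unfolding transport_distance_def
    by (subst (asm) cInf_less_iff) (auto intro!: bdd_belowI[of _ 0] transport_cost_nonneg)
qed

lemma transport_cost_glue_le:
  assumes "coupling V \<mu> \<nu> \<pi>\<^sub>1" "coupling V \<nu> \<rho> \<pi>\<^sub>2"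
  shows "transport_cost V d (glue_couplings V \<nu> \<pi>\<^sub>1 \<pi>\<^sub>2)
           \<le> transport_cost V d \<pi>\<^sub>1 + transport_cost V d \<pi>\<^sub>2"
proof -
  note marginals = glue_couplings_marginals[OF finite_V assms]
  define t where "t a b c = \<pi>\<^sub>1 a b * \<pi>\<^sub>2 b c / \<nu> b" for a b c
  have t_nonneg: "0 \<le> t a b c" if "b \<in> V" for a b c
  proof -
    have "0 \<le> \<nu> b" using assms(1) that unfolding coupling_def by (metis sum_nonneg)
    then show ?thesis using assms unfolding t_def coupling_def by simp
  qed
  have "transport_cost V d (glue_couplings V \<nu> \<pi>\<^sub>1 \<pi>\<^sub>2) = (\<Sum>a\<in>V. \<Sum>c\<in>V. \<Sum>b\<in>V. t a b c * d a c)"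
    by (simp add: transport_cost_def glue_couplings_def t_def sum_distrib_right cong: sum.cong)
  also have "\<dots> \<le> (\<Sum>a\<in>V. \<Sum>c\<in>V. \<Sum>b\<in>V. t a b c * d a b + t a b c * d b c)"
    using t_nonneg d_triangle
    by (intro sum_mono) (simp add: distrib_left[symmetric] mult_left_mono)
  also have "\<dots> = (\<Sum>a\<in>V. \<Sum>c\<in>V. \<Sum>b\<in>V. t a b c * d a b) + (\<Sum>a\<in>V. \<Sum>c\<in>V. \<Sum>b\<in>V. t a b c * d b c)"
    by (simp add: sum.distrib)
  also have "(\<Sum>a\<in>V. \<Sum>c\<in>V. \<Sum>b\<in>V. t a b c * d a b) = transport_cost V d \<pi>\<^sub>1"
  proof -
    have "(\<Sum>c\<in>V. \<Sum>b\<in>V. t a b c * d a b) = (\<Sum>b\<in>V. (\<Sum>c\<in>V. t a b c) * d a b)" for a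
      by (subst sum.swap) (simp add: sum_distrib_right)
    then show ?thesis using marginals(1) by (simp add: transport_cost_def t_def)
  qed
  also have "(\<Sum>a\<in>V. \<Sum>c\<in>V. \<Sum>b\<in>V. t a b c * d b c) = transport_cost V d \<pi>\<^sub>2"
  proof -
    have "(\<Sum>a\<in>V. \<Sum>c\<in>V. \<Sum>b\<in>V. t a b c * d b c) = (\<Sum>c\<in>V. \<Sum>b\<in>V. (\<Sum>a\<in>V. t a b c) * d b c)"
      by (subst sum.swap) (rule sum.cong[OF refl], subst sum.swap, simp add: sum_distrib_right)
    also have "\<dots> = (\<Sum>b\<in>V. \<Sum>c\<in>V. \<pi>\<^sub>2 b c * d b c)"
      using marginals(2) by (subst sum.swap) (simp add: t_def)
    finally show ?thesis by (simp add: transport_cost_def)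
  qed
  finally show ?thesis .
qed

lemma transport_distance_triangle:
  assumes "pmf_on V \<mu>" "pmf_on V \<nu>" "pmf_on V \<rho>"
  shows "transport_distance V d \<mu> \<rho> \<le> transport_distance V d \<mu> \<nu> + transport_distance V d \<nu> \<rho>"
proof (rule field_le_epsilon)
  fix \<epsilon> :: real assume "0 < \<epsilon>"
  then have "0 < \<epsilon> / 2" by simp
  obtain \<pi>\<^sub>1 where \<pi>\<^sub>1: "coupling V \<mu> \<nu> \<pi>\<^sub>1"
      "transport_cost V d \<pi>\<^sub>1 < transport_distance V d \<mu> \<nu> + \<epsilon> / 2"
    using transport_distance_approx[OF assms(1,2) \<open>0 < \<epsilon> / 2\<close>] .
  obtain \<pi>\<^sub>2 where \<pi>\<^sub>2: "coupling V \<nu> \<rho> \<pi>\<^sub>2"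
      "transport_cost V d \<pi>\<^sub>2 < transport_distance V d \<nu> \<rho> + \<epsilon> / 2"
    using transport_distance_approx[OF assms(2,3) \<open>0 < \<epsilon> / 2\<close>] .
  have "transport_distance V d \<mu> \<rho> \<le> transport_cost V d (glue_couplings V \<nu> \<pi>\<^sub>1 \<pi>\<^sub>2)"
    by (rule transport_distance_le_cost[OF coupling_glue[OF finite_V \<pi>\<^sub>1(1) \<pi>\<^sub>2(1)]])
  also have "\<dots> \<le> transport_cost V d \<pi>\<^sub>1 + transport_cost V d \<pi>\<^sub>2"
    by (rule transport_cost_glue_le[OF \<pi>\<^sub>1(1) \<pi>\<^sub>2(1)])
  finally show "transport_distance V d \<mu> \<rho>
      \<le> transport_distance V d \<mu> \<nu> + transport_distance V d \<nu> \<rho> + \<epsilon>"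
    using \<pi>\<^sub>1(2) \<pi>\<^sub>2(2) by linarith
qed

lemma transport_distance_convex:
  assumes "pmf_on V \<mu>" "pmf_on V \<nu>" "pmf_on V \<mu>'" "pmf_on V \<nu>'" "0 \<le> l" "l \<le> 1"
  shows "transport_distance V d (\<lambda>x. l * \<mu> x + (1 - l) * \<mu>' x) (\<lambda>y. l * \<nu> y + (1 - l) * \<nu>' y)
           \<le> l * transport_distance V d \<mu> \<nu> + (1 - l) * transport_distance V d \<mu>' \<nu>'"
proof (rule field_le_epsilon)
  fix \<epsilon> :: real assume "0 < \<epsilon>"
  obtain \<pi> where \<pi>: "coupling V \<mu> \<nu> \<pi>" "transport_cost V d \<pi> < transport_distance V d \<mu> \<nu> + \<epsilon>"
    using transport_distance_approx[OF assms(1,2) \<open>0 < \<epsilon>\<close>] .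
  obtain \<pi>' where \<pi>': "coupling V \<mu>' \<nu>' \<pi>'"
      "transport_cost V d \<pi>' < transport_distance V d \<mu>' \<nu>' + \<epsilon>"
    using transport_distance_approx[OF assms(3,4) \<open>0 < \<epsilon>\<close>] .
  have "transport_distance V d (\<lambda>x. l * \<mu> x + (1 - l) * \<mu>' x) (\<lambda>y. l * \<nu> y + (1 - l) * \<nu>' y)
      \<le> l * transport_cost V d \<pi> + (1 - l) * transport_cost V d \<pi>'"
    using transport_distance_le_cost[OF coupling_mix[OF \<pi>(1) \<pi>'(1) assms(5,6)]]
    by (simp add: transport_cost_mix)
  also have "\<dots> \<le> l * (transport_distance V d \<mu> \<nu> + \<epsilon>)
      + (1 - l) * (transport_distance V d \<mu>' \<nu>' + \<epsilon>)"
    using \<pi>(2) \<pi>'(2) assms(5,6) by (intro add_mono mult_left_mono) auto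
  finally show "transport_distance V d (\<lambda>x. l * \<mu> x + (1 - l) * \<mu>' x) (\<lambda>y. l * \<nu> y + (1 - l) * \<nu>' y)
      \<le> l * transport_distance V d \<mu> \<nu> + (1 - l) * transport_distance V d \<mu>' \<nu>' + \<epsilon>"
    by (simp add: algebra_simps)
qed

lemma transport_distance_point_masses_le:
  assumes "x \<in> V" "y \<in> V"
  shows "transport_distance V d (\<lambda>a. if a = x then 1 else 0) (\<lambda>b. if b = y then 1 else 0) \<le> d x y"
proof -
  have "(if a = x \<and> b = y then 1 else 0) * d a b
      = (if b = y then if a = x then d x y else 0 else 0)"
    for a b by simp
  then have "transport_cost V d (\<lambda>a b. if a = x \<and> b = y then 1 else 0) = d x y"
    using assms finite_V by (simp add: transport_cost_def sum.delta')
  then show ?thesis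
    using transport_distance_le_cost[OF coupling_point_masses[OF finite_V assms]] by simp
qed

text \<open>The easy half of Kantorovich duality.\<close>
lemma transport_distance_ge_potential:
  assumes "pmf_on V \<mu>" "pmf_on V \<nu>" and lip: "\<And>a b. a \<in> V \<Longrightarrow> b \<in> V \<Longrightarrow> f b - f a \<le> d a b"
  shows "(\<Sum>b\<in>V. \<nu> b * f b) - (\<Sum>a\<in>V. \<mu> a * f a) \<le> transport_distance V d \<mu> \<nu>"
proof (rule transport_distance_ge[OF assms(1,2)])
  fix \<pi> assume c: "coupling V \<mu> \<nu> \<pi>"
  have "(\<Sum>b\<in>V. \<nu> b * f b) - (\<Sum>a\<in>V. \<mu> a * f a)
      = (\<Sum>b\<in>V. (\<Sum>a\<in>V. \<pi> a b) * f b) - (\<Sum>a\<in>V. (\<Sum>b\<in>V. \<pi> a b) * f a)"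
    using c unfolding coupling_def by simp
  also have "\<dots> = (\<Sum>a\<in>V. \<Sum>b\<in>V. \<pi> a b * (f b - f a))"
    by (simp add: sum_distrib_right right_diff_distrib sum_subtractf) (subst sum.swap, simp)
  also have "\<dots> \<le> transport_cost V d \<pi>"
    unfolding transport_cost_def using c lip unfolding coupling_def
    by (intro sum_mono mult_left_mono) auto
  finally show "(\<Sum>b\<in>V. \<nu> b * f b) - (\<Sum>a\<in>V. \<mu> a * f a) \<le> transport_cost V d \<pi>" .
qed

end

sublocale connected_hypergraph \<subseteq> finite_transport V "hdist H w"
  by unfold_locales (use finite_V hdist_nonneg hdist_triangle in auto)

section \<open>The lazy random walk\<close>

lemma rw_measure_affine:
  "rw_measure H w \<alpha> x z = \<alpha> * (if z = x then 1 else 0) + (1 - \<alpha>) * rw_measure H w 0 x z"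
  by (simp add: rw_measure_def)

lemma rw_measure_one: "rw_measure H w 1 x = (\<lambda>z. if z = x then 1 else 0)"
  by (simp add: fun_eq_iff rw_measure_def)

lemma rw_measure_mix:
  assumes "l * (1 - a) = 1 - b"
  shows "rw_measure H w b x = (\<lambda>z. l * rw_measure H w a x z + (1 - l) * rw_measure H w 1 x z)"
proof
  fix z
  have "l * rw_measure H w a x z + (1 - l) * rw_measure H w 1 x z
      = (l * a + (1 - l)) * (if z = x then 1 else 0) + l * (1 - a) * rw_measure H w 0 x z"
    by (simp add: rw_measure_affine[of H w a] rw_measure_one algebra_simps)
  also have "\<dots> = rw_measure H w b x z"
  proof -
    have "b = l * a + (1 - l)" using assms by (simp add: algebra_simps)
    then show ?thesis unfolding rw_measure_affine[of H w b] assms[symmetric] by simp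
  qed
  finally show "rw_measure H w b x z = l * rw_measure H w a x z + (1 - l) * rw_measure H w 1 x z" ..
qed

lemma rw_measure_zero_eq:
  "rw_measure H w 0 x z = (if z = x then 0 else
     \<Sum>h\<in>{h\<in>H. x \<in> h \<and> z \<in> h}. 1 / (real (card h) - 1) * (w h / Deg H w x))"
proof (cases "z \<noteq> x \<and> \<not> adj H x z")
  case True
  then have "{h\<in>H. x \<in> h \<and> z \<in> h} = {}" by (auto simp: adj_def)
  moreover have "rw_measure H w 0 x z = 0" using True by (simp add: rw_measure_def)
  ultimately show ?thesis using True by (simp only: sum.empty if_False)
qed (auto simp: rw_measure_def)

lemma pmf_on_rw_measure:
  assumes hg: "hypergraph V H w" and card: "\<forall>h\<in>H. card h \<ge> 2"
    and x: "x \<in> V" "\<exists>h\<in>H. x \<in> h" and \<alpha>: "0 \<le> \<alpha>" "\<alpha> \<le> 1"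
  shows "pmf_on V (rw_measure H w \<alpha> x)"
proof -
  have finite: "finite V" "finite H" and w_pos: "\<And>h. h \<in> H \<Longrightarrow> 0 < w h"
    and edge_subset: "\<And>h. h \<in> H \<Longrightarrow> h \<subseteq> V"
    using hg by (auto simp: hypergraph_def)
  define f where "f h = 1 / (real (card h) - 1) * (w h / Deg H w x)" for h
  have rw0_eq: "rw_measure H w 0 x z = (if z = x then 0 else \<Sum>h\<in>{h\<in>H. x \<in> h \<and> z \<in> h}. f h)" for z
    unfolding f_def by (rule rw_measure_zero_eq)
  have card_pos: "0 < real (card h) - 1" if "h \<in> H" for h
    using card that by force
  have Deg_pos: "0 < Deg H w x"
  proof -
    obtain h where h: "h \<in> H" "x \<in> h" using x(2) by blast
    have "w h \<le> Deg H w x" unfolding Deg_def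
      using h finite w_pos by (intro member_le_sum) (auto intro: less_imp_le)
    then show ?thesis using w_pos[OF h(1)] by linarith
  qed
  have "0 \<le> f h" if "h \<in> H" for h
    unfolding f_def using card_pos[OF that] w_pos[OF that] Deg_pos by simp
  then have rw0_nonneg: "0 \<le> rw_measure H w 0 x z" for z
    unfolding rw0_eq by (auto intro: sum_nonneg)
  have rw0_sum: "sum (rw_measure H w 0 x) V = 1"
  proof -
    have "sum (rw_measure H w 0 x) V = (\<Sum>z\<in>V. \<Sum>h\<in>{h\<in>H. z \<noteq> x \<and> x \<in> h \<and> z \<in> h}. f h)"
      unfolding rw0_eq by (intro sum.cong refl) simp
    also have "\<dots> = (\<Sum>h\<in>H. \<Sum>z\<in>{z\<in>V. z \<noteq> x \<and> x \<in> h \<and> z \<in> h}. f h)"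
      by (rule sum.swap_restrict[OF finite])
    also have "\<dots> = (\<Sum>h\<in>H. if x \<in> h then w h / Deg H w x else 0)"
    proof (intro sum.cong refl)
      fix h assume h: "h \<in> H"
      show "(\<Sum>z\<in>{z\<in>V. z \<noteq> x \<and> x \<in> h \<and> z \<in> h}. f h) = (if x \<in> h then w h / Deg H w x else 0)"
      proof (cases "x \<in> h")
        case True
        have "finite h" using edge_subset[OF h] finite finite_subset by blast
        have "{z\<in>V. z \<noteq> x \<and> x \<in> h \<and> z \<in> h} = h - {x}" using edge_subset[OF h] True by auto
        moreover have "real (card (h - {x})) = real (card h) - 1"
          using \<open>finite h\<close> True card_pos[OF h] by (simp add: card_Diff_singleton of_nat_diff)
        ultimately show ?thesis using True card_pos[OF h] by (simp add: f_def)
      qed simp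
    qed
    also have "\<dots> = 1"
      using Deg_pos
      by (simp add: sum.inter_filter[OF finite(2), symmetric] sum_divide_distrib[symmetric] Deg_def)
    finally show ?thesis .
  qed
  have "0 \<le> rw_measure H w \<alpha> x z" for z
    unfolding rw_measure_affine[of H w \<alpha>] using \<alpha> rw0_nonneg[of z] by simp
  moreover have "sum (rw_measure H w \<alpha> x) V
      = \<alpha> * (\<Sum>z\<in>V. if z = x then 1 else 0) + (1 - \<alpha>) * sum (rw_measure H w 0 x) V"
    unfolding rw_measure_affine[of H w \<alpha>] by (simp add: sum.distrib sum_distrib_left)
  ultimately show ?thesis
    using x(1) finite(1) rw0_sum by (simp add: pmf_on_def)
qed

section \<open>Curvature\<close>

lemma mono_on_tendsto_at_left_SUP:
  fixes f :: "real \<Rightarrow> real"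
  assumes "a < b" "mono_on {a..<b} f" "\<And>x. x \<in> {a..<b} \<Longrightarrow> f x \<le> K"
  shows "(f \<longlongrightarrow> (SUP x\<in>{a..<b}. f x)) (at_left b)"
proof -
  have "(f \<longlongrightarrow> Sup (f ` ({..<b} \<inter> {a..}))) (at b within ({..<b} \<inter> {a..}))"
    using assms by (intro Lim_left_bound[where K = K]) (auto intro!: mono_onD[OF assms(2)])
  moreover have "{..<b} \<inter> {a..} = {a..<b}" by auto
  moreover have "at b within {a..<b} = at_left b"
  proof -
    have "{a..<b} - {b} = {a..b} - {b}" by auto
    then show ?thesis using at_within_Icc_at_left[OF assms(1)] by (simp add: at_within_def)
  qed
  ultimately show ?thesis by simp
qed

locale lly_hypergraph = connected_hypergraph +
  assumes edge_card: "\<forall>h\<in>H. card h \<ge> 2"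
begin

lemma pmf_on_walk:
  assumes "x \<in> V" "y \<in> V" "x \<noteq> y" "0 \<le> \<alpha>" "\<alpha> \<le> 1"
  shows "pmf_on V (rw_measure H w \<alpha> x)"
  using pmf_on_rw_measure[OF hypergraph edge_card] vertex_in_edge assms by blast

text \<open>For \<open>x \<noteq> y\<close>, \<open>transport_gain x y \<alpha> = d(x,y) \<kappa>\<^sub>\<alpha>(x,y) / (1 - \<alpha>)\<close>.\<close>
definition transport_gain :: "'a \<Rightarrow> 'a \<Rightarrow> real \<Rightarrow> real" where
  "transport_gain x y \<alpha> =
     (hdist H w x y - wasserstein V H w (rw_measure H w \<alpha> x) (rw_measure H w \<alpha> y)) / (1 - \<alpha>)"

lemma transport_gain_mono:
  assumes x: "x \<in> V" and y: "y \<in> V" and "x \<noteq> y"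
  shows "mono_on {0..<1} (transport_gain x y)"
proof (rule mono_onI)
  fix a b :: real assume ab: "a \<in> {0..<1}" "b \<in> {0..<1}" "a \<le> b"
  \<comment> \<open>\<open>\<mu>\<^sup>b = l \<mu>\<^sup>a + (1 - l) \<mu>\<^sup>1\<close>, and \<open>\<mu>\<^sup>1\<close> is the point mass\<close>
  define l where "l = (1 - b) / (1 - a)"
  have l: "0 \<le> l" "l \<le> 1" "l * (1 - a) = 1 - b" using ab by (auto simp: l_def field_simps)
  let ?W = "\<lambda>\<alpha>. transport_distance V (hdist H w) (rw_measure H w \<alpha> x) (rw_measure H w \<alpha> y)"
  have pmf: "pmf_on V (rw_measure H w \<alpha> x)" "pmf_on V (rw_measure H w \<alpha> y)" if "0 \<le> \<alpha>" "\<alpha> \<le> 1" for \<alpha>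
    using pmf_on_walk assms that by metis+
  have "?W b \<le> l * ?W a + (1 - l) * ?W 1"
    unfolding rw_measure_mix[OF l(3)]
    using ab by (intro transport_distance_convex pmf l(1,2)) auto
  moreover have "?W 1 \<le> hdist H w x y"
    unfolding rw_measure_one by (rule transport_distance_point_masses_le[OF x y])
  ultimately have "?W b \<le> l * ?W a + (1 - l) * hdist H w x y"
    using l mult_left_mono[of "?W 1" "hdist H w x y" "1 - l"] by linarith
  then have "l * (hdist H w x y - ?W a) \<le> hdist H w x y - ?W b"
    by (simp add: algebra_simps)
  then have "l * (hdist H w x y - ?W a) / (1 - b) \<le> (hdist H w x y - ?W b) / (1 - b)"
    using ab by (intro divide_right_mono) auto
  moreover have "l * X / (1 - b) = X / (1 - a)" for X using ab by (simp add: l_def)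
  ultimately show "transport_gain x y a \<le> transport_gain x y b"
    unfolding transport_gain_def wasserstein_eq_transport_distance by simp
qed

lemma transport_gain_le:
  assumes x: "x \<in> V" and y: "y \<in> V" and "x \<noteq> y" and \<alpha>: "0 \<le> \<alpha>" "\<alpha> < 1"
  shows "transport_gain x y \<alpha> \<le> hdist H w x y + (\<Sum>z\<in>V. rw_measure H w 0 x z * hdist H w x z)"
proof -
  let ?\<mu> = "rw_measure H w \<alpha> x" and ?\<nu> = "rw_measure H w \<alpha> y" and ?d = "hdist H w"
  let ?M = "\<Sum>z\<in>V. rw_measure H w 0 x z * ?d x z"
  have pmf: "pmf_on V ?\<mu>" "pmf_on V ?\<nu>" using pmf_on_walk assms by (metis less_imp_le)+
  have "(\<Sum>z\<in>V. ?\<nu> z * ?d x z) - (\<Sum>z\<in>V. ?\<mu> z * ?d x z) \<le> transport_distance V ?d ?\<mu> ?\<nu>"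
    using hdist_triangle[OF x]
    by (intro transport_distance_ge_potential pmf) (simp add: algebra_simps)
  moreover have "\<alpha> * ?d x y \<le> (\<Sum>z\<in>V. ?\<nu> z * ?d x z)"
  proof -
    have "?\<nu> y = \<alpha>" by (simp add: rw_measure_def)
    moreover have "0 \<le> ?\<nu> z * ?d x z" if "z \<in> V" for z
      using pmf(2) that hdist_nonneg[OF x] by (simp add: pmf_on_def)
    ultimately show ?thesis
      using member_le_sum[OF y _ finite_V, of "\<lambda>z. ?\<nu> z * ?d x z"] by simp
  qed
  moreover have "(\<Sum>z\<in>V. ?\<mu> z * ?d x z) = (1 - \<alpha>) * ?M"
  proof -
    have summand: "?\<mu> z * ?d x z = (1 - \<alpha>) * (rw_measure H w 0 x z * ?d x z)" for z
      by (cases "z = x") (simp_all add: rw_measure_affine[of H w \<alpha>])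
    show ?thesis by (simp only: summand sum_distrib_left)
  qed
  ultimately have "?d x y - transport_distance V ?d ?\<mu> ?\<nu> \<le> (1 - \<alpha>) * (?d x y + ?M)"
    by (simp add: algebra_simps)
  then show ?thesis
    using \<alpha>
    by (simp add: transport_gain_def wasserstein_eq_transport_distance pos_divide_le_eq mult.commute)
qed

lemma transport_gain_tendsto:
  assumes "x \<in> V" "y \<in> V" "x \<noteq> y"
  shows "(transport_gain x y \<longlongrightarrow> hdist H w x y * LLY_curvature V H w x y) (at_left 1)"
proof -
  define L where "L = (SUP \<alpha>\<in>{0..<1}. transport_gain x y \<alpha>)"
  have L: "(transport_gain x y \<longlongrightarrow> L) (at_left 1)"
    unfolding L_def
    by (rule mono_on_tendsto_at_left_SUP[OF _ transport_gain_mono[OF assms]])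
      (auto intro: transport_gain_le[OF assms])
  have d_pos: "0 < hdist H w x y" using hdist_pos assms by blast
  have "\<forall>\<^sub>F \<alpha> in at_left 1. \<alpha> \<in> {0<..<(1::real)}" by (rule eventually_at_left_real) simp
  then have "\<forall>\<^sub>F \<alpha> in at_left 1.
      transport_gain x y \<alpha> / hdist H w x y = kappa_alpha V H w \<alpha> x y / (1 - \<alpha>)"
    by (rule eventually_mono)
      (use d_pos in \<open>simp add: transport_gain_def kappa_alpha_def field_simps\<close>)
  moreover have "((\<lambda>\<alpha>. transport_gain x y \<alpha> / hdist H w x y) \<longlongrightarrow> L / hdist H w x y) (at_left 1)"
    using L d_pos by (intro tendsto_divide tendsto_const) auto
  ultimately have "((\<lambda>\<alpha>. kappa_alpha V H w \<alpha> x y / (1 - \<alpha>)) \<longlongrightarrow> L / hdist H w x y) (at_left 1)"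
    by (rule Lim_transform_eventually[rotated])
  then have "LLY_curvature V H w x y = L / hdist H w x y"
    unfolding LLY_curvature_def by (rule tendsto_Lim[OF trivial_limit_at_left_real])
  then show ?thesis using L d_pos by simp
qed

lemma LLY_curvature_superadditive:
  assumes in_V: "x \<in> V" "y \<in> V" "z \<in> V" and distinct: "x \<noteq> z" "z \<noteq> y" "x \<noteq> y"
    and between: "hdist H w x y = hdist H w x z + hdist H w z y"
  shows "hdist H w x z * LLY_curvature V H w x z + hdist H w z y * LLY_curvature V H w z y
           \<le> hdist H w x y * LLY_curvature V H w x y"
proof (rule tendsto_le[OF trivial_limit_at_left_real])
  show "(transport_gain x y \<longlongrightarrow> hdist H w x y * LLY_curvature V H w x y) (at_left 1)"
    using in_V distinct by (intro transport_gain_tendsto)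
  show "((\<lambda>\<alpha>. transport_gain x z \<alpha> + transport_gain z y \<alpha>) \<longlongrightarrow>
      hdist H w x z * LLY_curvature V H w x z + hdist H w z y * LLY_curvature V H w z y)
      (at_left 1)"
    using in_V distinct by (intro tendsto_add transport_gain_tendsto)
  have "transport_gain x z \<alpha> + transport_gain z y \<alpha> \<le> transport_gain x y \<alpha>" if "0 < \<alpha>" "\<alpha> < 1" for \<alpha>
  proof -
    have "wasserstein V H w (rw_measure H w \<alpha> x) (rw_measure H w \<alpha> y)
        \<le> wasserstein V H w (rw_measure H w \<alpha> x) (rw_measure H w \<alpha> z)
          + wasserstein V H w (rw_measure H w \<alpha> z) (rw_measure H w \<alpha> y)"
      unfolding wasserstein_eq_transport_distance
      using pmf_on_walk in_V distinct that by (intro transport_distance_triangle) auto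
    then show ?thesis
      using that between
      by (simp add: transport_gain_def add_divide_distrib[symmetric] divide_right_mono)
  qed
  moreover have "\<forall>\<^sub>F \<alpha> in at_left 1. \<alpha> \<in> {0<..<(1::real)}" by (rule eventually_at_left_real) simp
  ultimately show "\<forall>\<^sub>F \<alpha> in at_left 1.
      transport_gain x z \<alpha> + transport_gain z y \<alpha> \<le> transport_gain x y \<alpha>"
    by (auto elim: eventually_mono)
qed

lemma LLY_curvature_ge_along_shortest_hyperpath:
  assumes well_transported_ge: "\<forall>u\<in>V. \<forall>v\<in>V. well_transported H w u v \<longrightarrow> LLY_curvature V H w u v \<ge> C"
  shows "hyperpath H hs x y \<Longrightarrow> x \<in> V \<Longrightarrow> y \<in> V \<Longrightarrow> x \<noteq> y \<Longrightarrow>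
    hdist H w x y = hyperpath_weight w hs \<Longrightarrow> C \<le> LLY_curvature V H w x y"
proof (induction hs arbitrary: x)
  case Nil
  then show ?case by (simp add: hyperpath_def)
next
  case (Cons h t)
  show ?case
  proof (cases "t = []")
    case True
    then have "well_transported H w x y"
      using Cons.prems by (auto simp: well_transported_def)
    then show ?thesis using well_transported_ge Cons.prems by blast
  next
    case False
    then obtain z where h: "h \<in> H" "x \<in> h" "z \<in> h" and t: "hyperpath H t z y"
      using hyperpath_ConsE[OF Cons.prems(1)] by blast
    have z: "z \<in> V" using edge_subset h by blast
    have "hdist H w x z \<le> w h"
      using hdist_le_hyperpath_weight[OF hypergraph, of "[h]" x z] h by simp
    moreover have "hdist H w z y \<le> hyperpath_weight w t"
      using hdist_le_hyperpath_weight[OF hypergraph t] .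
    moreover have "hdist H w x y \<le> hdist H w x z + hdist H w z y"
      using hdist_triangle Cons.prems(2,3) z by blast
    ultimately have xz: "hdist H w x z = w h" and zy: "hdist H w z y = hyperpath_weight w t"
      using Cons.prems(5) by simp_all
    have "z \<noteq> x" using xz weight_pos[OF h(1)] by auto
    have "z \<noteq> y" using zy hyperpath_weight_pos[OF t] by auto
    have "well_transported H w x z"
      using h xz \<open>z \<noteq> x\<close> by (auto simp: well_transported_def)
    then have C_xz: "C \<le> LLY_curvature V H w x z"
      using well_transported_ge Cons.prems(2) z by blast
    have C_zy: "C \<le> LLY_curvature V H w z y"
      using Cons.IH[OF t z Cons.prems(3) \<open>z \<noteq> y\<close> zy] .
    have "C * hdist H w x y = C * hdist H w x z + C * hdist H w z y"
      using xz zy Cons.prems(5) by (simp add: algebra_simps)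
    also have "\<dots> \<le> hdist H w x z * LLY_curvature V H w x z
        + hdist H w z y * LLY_curvature V H w z y"
      using C_xz C_zy hdist_nonneg[OF Cons.prems(2) z] hdist_nonneg[OF z Cons.prems(3)]
      by (intro add_mono) (metis mult.commute mult_left_mono)+
    also have "\<dots> \<le> hdist H w x y * LLY_curvature V H w x y"
      using xz zy Cons.prems(2-5) z \<open>z \<noteq> x\<close> \<open>z \<noteq> y\<close> by (intro LLY_curvature_superadditive) simp_all
    finally show ?thesis
      using hdist_pos[OF Cons.prems(2-4)] by (simp add: mult.commute)
  qed
qed

end

theorem mainTheorem3:
  fixes V :: "'a set" and H :: "'a set set" and w :: "'a set \<Rightarrow> real" and C :: real
  assumes "hypergraph V H w"
    and "hconnected V H"
    and "\<forall>h\<in>H. card h \<ge> 2"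
    and "\<forall>u\<in>V. \<forall>v\<in>V. well_transported H w u v \<longrightarrow> LLY_curvature V H w u v \<ge> C"
  shows "\<forall>x\<in>V. \<forall>y\<in>V. x \<noteq> y \<longrightarrow> LLY_curvature V H w x y \<ge> C"
proof (intro ballI impI)
  interpret lly_hypergraph V H w
    using assms(1-3) by unfold_locales
  fix x y assume "x \<in> V" "y \<in> V" "x \<noteq> y"
  then obtain hs where "hyperpath H hs x y" "hdist H w x y = hyperpath_weight w hs"
    using shortest_hyperpath by metis
  then show "C \<le> LLY_curvature V H w x y"
    using LLY_curvature_ge_along_shortest_hyperpath[OF assms(4)] \<open>x \<in> V\<close> \<open>y \<in> V\<close> \<open>x \<noteq> y\<close> by blast
qed

end
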